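(* Let $S$ be a $\Sigma_1$-sequent, $H=(H_1,\dots,H_q)$ a Herbrand structure of $S$, $D=(U_1,\dots,U_q)\circ W$ a decomposition of $H$ with variables $\alpha_1,\dots,\alpha_n$ and $W=\{\bar w_1,\dots,\bar w_k\}$, and let $S^\sim$ be the schematic extended Herbrand sequent of $S$ with respect to $D$. Then the canonical substitution $[X\backslash \lambda\bar\alpha.\,C(S^\sim)]$ is a solution of $S^\sim$, i.e. $$C(S^\sim)(\bar\alpha)\to\bigwedge_{i=1}^k C(S^\sim)(\bar w_i),\ \mathcal F'_1,\dots,\mathcal F'_p\vdash \mathcal F'_{p+1},\dots,\mathcal F'_q$$ is a quasi-tautology.
   Context: We work in first-order predicate logic with equality. A $\Sigma_1$-sequent is a sequent $S$ of the form $\forall\bar x_1 F_1,\dots,\forall\bar x_p F_p\vdash\exists\bar x_{p+1}F_{p+1},\dots,\exists\bar x_q F_q$, where each $F_i$ is quantifier-free and $\bar x_i$ is a block of $k_i\ge 0$ variables. A sequent is E-valid if it is valid in predicate logic with equality (a quantifier-free formula or sequent with free variables is called E-valid if its universal closure is); a quasi-tautology is a quantifier-free E-valid sequent. A Herbrand structure of $S$ is a tuple $H=(H_1,\dots,H_q)$, $H_i$ a finite set of $k_i$-vectors of ground terms, such that, with $\mathcal F_i=\{F_i[\bar x_i\backslash\bar t]:\bar t\in H_i\}$ if $k_i>0$ and $\mathcal F_i=\{F_i\}$ if $k_i=0$, the sequent $\mathcal F_1\cup\dots\cup\mathcal F_p\vdash\mathcal F_{p+1}\cup\dots\cup\mathcal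 F_q$ is a quasi-tautology. A decomposition of $H$ is a pair $D=(U_1,\dots,U_q)\circ W$ where, for fresh variables $\bar\alpha=(\alpha_1,\dots,\alpha_n)$, each $U_i$ is a finite set of $k_i$-vectors of terms possibly containing the $\alpha_j$, and $W=\{\bar w_1,\dots,\bar w_k\}$ is a finite set of $n$-vectors of ground terms not containing any $\alpha_j$, such that $H_i=\{u[\bar\alpha\backslash\bar w]:u\in U_i,\bar w\in W\}$ for every $i$ with $k_i>0$. Put $\mathcal F'_i=\{F_i[\bar x_i\backslash\bar t]:\bar t\in U_i\}$ if $k_i>0$ and $\mathcal F'_i=\{F_i\}$ if $k_i=0$. For an $n$-place predicate variable $X$, the schematic extended Herbrand sequent of $S$ w.r.t. $D$ is $$S^\sim:\ X\bar\alpha\to\bigwedge_{i=1}^k X\bar w_i,\ \mathcal F'_1,\dots,\mathcal F'_p\vdash\mathcal F'_{p+1},\dots,\mathcal F'_q.$$ For a quantifier-free formula $A$ whose free variables are among $\alpha_1,\dots,\alpha_n$, the second-order substitution $[X\backslash\lambda\bar\alpha.A]$ is a solution of $S^\sim$ if $S^\sim[X\backslash\lambda\bar\alpha.A]$ is a quasi-tautology. Let $F[l]$ be the conjunction of all formulas in $\mathcal F'_1\cup\dots\cup\mathcal F'_p$ and $F[r]$ the disjunction of all formulas in $\mathcal F'_{p+1}\cup\dots\cup\mathcal F'_q$. The canonical formula is $C(S^\sim)=F[l]\wedge\neg F[r]$ (a formula in $\bar\alpha$), and $[X\backslash\lambda\bar\alpha.C(S^\sim)]$ is the canonical substitution; $C(S^\sim)(\bar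 t)$ denotes $C(S^\sim)[\bar\alpha\backslash\bar t]$. *)

theory Defs
  imports Main
begin

datatype ('f, 'v) trm = Var 'v | Fn 'f "('f, 'v) trm list"

text \<open>The constructor
  PVar is the application of the single n-place predicate variable X used in
  schematic extended Herbrand sequents; ordinary first-order formulas are X-free.\<close>
datatype ('f, 'p, 'v) fm =
    Bot
  | Atom 'p "('f, 'v) trm list"
  | Eq "('f, 'v) trm" "('f, 'v) trm"
  | Neg "('f, 'p, 'v) fm"
  | And "('f, 'p, 'v) fm" "('f, 'p, 'v) fm"
  | Or "('f, 'p, 'v) fm" "('f, 'p, 'v) fm"
  | Imp "('f, 'p, 'v) fm" "('f, 'p, 'v) fm"
  | PVar "('f, 'v) trm list"

fun vars_trm :: "('f, 'v) trm \<Rightarrow> 'v set" where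
  "vars_trm (Var v) = {v}"
| "vars_trm (Fn f ts) = (\<Union>t\<in>set ts. vars_trm t)"

definition ground :: "('f, 'v) trm \<Rightarrow> bool" where
  "ground t \<longleftrightarrow> vars_trm t = {}"

fun vars_fm :: "('f, 'p, 'v) fm \<Rightarrow> 'v set" where
  "vars_fm Bot = {}"
| "vars_fm (Atom P ts) = (\<Union>t\<in>set ts. vars_trm t)"
| "vars_fm (Eq s t) = vars_trm s \<union> vars_trm t"
| "vars_fm (Neg A) = vars_fm A"
| "vars_fm (And A B) = vars_fm A \<union> vars_fm B"
| "vars_fm (Or A B) = vars_fm A \<union> vars_fm B"
| "vars_fm (Imp A B) = vars_fm A \<union> vars_fm B"
| "vars_fm (PVar ts) = (\<Union>t\<in>set ts. vars_trm t)"

fun X_free :: "('f, 'p, 'v) fm \<Rightarrow> bool" where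
  "X_free Bot = True"
| "X_free (Atom P ts) = True"
| "X_free (Eq s t) = True"
| "X_free (Neg A) = X_free A"
| "X_free (And A B) = (X_free A \<and> X_free B)"
| "X_free (Or A B) = (X_free A \<and> X_free B)"
| "X_free (Imp A B) = (X_free A \<and> X_free B)"
| "X_free (PVar ts) = False"

fun subst_trm :: "('v \<Rightarrow> ('f, 'v) trm) \<Rightarrow> ('f, 'v) trm \<Rightarrow> ('f, 'v) trm" where
  "subst_trm \<sigma> (Var v) = \<sigma> v"
| "subst_trm \<sigma> (Fn f ts) = Fn f (map (subst_trm \<sigma>) ts)"

fun subst_fm :: "('v \<Rightarrow> ('f, 'v) trm) \<Rightarrow> ('f, 'p, 'v) fm \<Rightarrow> ('f, 'p, 'v) fm" where
  "subst_fm \<sigma> Bot = Bot"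
| "subst_fm \<sigma> (Atom P ts) = Atom P (map (subst_trm \<sigma>) ts)"
| "subst_fm \<sigma> (Eq s t) = Eq (subst_trm \<sigma> s) (subst_trm \<sigma> t)"
| "subst_fm \<sigma> (Neg A) = Neg (subst_fm \<sigma> A)"
| "subst_fm \<sigma> (And A B) = And (subst_fm \<sigma> A) (subst_fm \<sigma> B)"
| "subst_fm \<sigma> (Or A B) = Or (subst_fm \<sigma> A) (subst_fm \<sigma> B)"
| "subst_fm \<sigma> (Imp A B) = Imp (subst_fm \<sigma> A) (subst_fm \<sigma> B)"
| "subst_fm \<sigma> (PVar ts) = PVar (map (subst_trm \<sigma>) ts)"

definition mk_sub :: "'v list \<Rightarrow> ('f, 'v) trm list \<Rightarrow> 'v \<Rightarrow> ('f, 'v) trm" where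
  "mk_sub xs ts = (\<lambda>v. case map_of (zip xs ts) v of Some t \<Rightarrow> t | None \<Rightarrow> Var v)"

text \<open>Second-order substitution [X \ lambda al. A]: replaces every X ts by A[al \ ts].\<close>
fun so_subst :: "'v list \<Rightarrow> ('f, 'p, 'v) fm \<Rightarrow> ('f, 'p, 'v) fm \<Rightarrow> ('f, 'p, 'v) fm" where
  "so_subst al A Bot = Bot"
| "so_subst al A (Atom P ts) = Atom P ts"
| "so_subst al A (Eq s t) = Eq s t"
| "so_subst al A (Neg B) = Neg (so_subst al A B)"
| "so_subst al A (And B C) = And (so_subst al A B) (so_subst al A C)"
| "so_subst al A (Or B C) = Or (so_subst al A B) (so_subst al A C)"
| "so_subst al A (Imp B C) = Imp (so_subst al A B) (so_subst al A C)"
| "so_subst al A (PVar ts) = subst_fm (mk_sub al ts) A"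

fun conj_list :: "('f, 'p, 'v) fm list \<Rightarrow> ('f, 'p, 'v) fm" where
  "conj_list [] = Neg Bot"
| "conj_list (A # As) = And A (conj_list As)"

fun disj_list :: "('f, 'p, 'v) fm list \<Rightarrow> ('f, 'p, 'v) fm" where
  "disj_list [] = Bot"
| "disj_list (A # As) = Or A (disj_list As)"

definition conj_set :: "('f, 'p, 'v) fm set \<Rightarrow> ('f, 'p, 'v) fm" where
  "conj_set S = conj_list (SOME xs. set xs = S)"

definition disj_set :: "('f, 'p, 'v) fm set \<Rightarrow> ('f, 'p, 'v) fm" where
  "disj_set S = disj_list (SOME xs. set xs = S)"

fun eval_trm :: "('f \<Rightarrow> 'a list \<Rightarrow> 'a) \<Rightarrow> ('v \<Rightarrow> 'a) \<Rightarrow> ('f, 'v) trm \<Rightarrow> 'a" where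
  "eval_trm I \<sigma> (Var v) = \<sigma> v"
| "eval_trm I \<sigma> (Fn f ts) = I f (map (eval_trm I \<sigma>) ts)"

text \<open>Evaluation of X-free formulas (X is interpreted as false; it never occurs in the
  formulas whose validity is considered).\<close>
fun eval_fm :: "('f \<Rightarrow> 'a list \<Rightarrow> 'a) \<Rightarrow> ('p \<Rightarrow> 'a list \<Rightarrow> bool) \<Rightarrow> ('v \<Rightarrow> 'a)
                 \<Rightarrow> ('f, 'p, 'v) fm \<Rightarrow> bool" where
  "eval_fm I R \<sigma> Bot = False"
| "eval_fm I R \<sigma> (Atom P ts) = R P (map (eval_trm I \<sigma>) ts)"
| "eval_fm I R \<sigma> (Eq s t) = (eval_trm I \<sigma> s = eval_trm I \<sigma> t)"
| "eval_fm I R \<sigma> (Neg A) = (\<not> eval_fm I R \<sigma> A)"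
| "eval_fm I R \<sigma> (And A B) = (eval_fm I R \<sigma> A \<and> eval_fm I R \<sigma> B)"
| "eval_fm I R \<sigma> (Or A B) = (eval_fm I R \<sigma> A \<or> eval_fm I R \<sigma> B)"
| "eval_fm I R \<sigma> (Imp A B) = (eval_fm I R \<sigma> A \<longrightarrow> eval_fm I R \<sigma> B)"
| "eval_fm I R \<sigma> (PVar ts) = False"

text \<open>A quantifier-free sequent Gamma |- Delta is a quasi-tautology (E-valid) over domains
  of type 'a: it is X-free and its universal closure holds in every structure with
  domain 'a in which = is interpreted as identity.\<close>
definition qtaut :: "'a itself \<Rightarrow> ('f, 'p, 'v) fm set \<Rightarrow> ('f, 'p, 'v) fm set \<Rightarrow> bool" where
  "qtaut _ \<Gamma> \<Delta> \<longleftrightarrow> (\<forall>A\<in>\<Gamma> \<union> \<Delta>. X_free A) \<and>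
     (\<forall>(I :: 'f \<Rightarrow> 'a list \<Rightarrow> 'a) (R :: 'p \<Rightarrow> 'a list \<Rightarrow> bool) (\<sigma> :: 'v \<Rightarrow> 'a).
        (\<forall>A\<in>\<Gamma>. eval_fm I R \<sigma> A) \<longrightarrow> (\<exists>B\<in>\<Delta>. eval_fm I R \<sigma> B))"

text \<open>A Sigma_1-sequent  forall xs_0 F_0, ..., forall xs_{p-1} F_{p-1} |- exists xs_p F_p, ...,
  exists xs_{q-1} F_{q-1}  is given by p, q and, for i < q, the variable block xs i and
  the quantifier-free formula F i. (Indices are 0-based.)\<close>
definition sigma1_sequent :: "nat \<Rightarrow> nat \<Rightarrow> (nat \<Rightarrow> 'v list) \<Rightarrow> (nat \<Rightarrow> ('f, 'p, 'v) fm) \<Rightarrow> bool" where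
  "sigma1_sequent p q xs F \<longleftrightarrow> p \<le> q \<and> (\<forall>i<q. distinct (xs i) \<and> X_free (F i))"

definition inst_set :: "'v list \<Rightarrow> ('f, 'p, 'v) fm \<Rightarrow> ('f, 'v) trm list set \<Rightarrow> ('f, 'p, 'v) fm set" where
  "inst_set x A T = (if length x > 0 then {subst_fm (mk_sub x t) A | t. t \<in> T} else {A})"

definition herbrand_structure :: "'a itself \<Rightarrow> nat \<Rightarrow> nat \<Rightarrow> (nat \<Rightarrow> 'v list) \<Rightarrow> (nat \<Rightarrow> ('f, 'p, 'v) fm)
     \<Rightarrow> (nat \<Rightarrow> ('f, 'v) trm list set) \<Rightarrow> bool" where
  "herbrand_structure A p q xs F H \<longleftrightarrow>
     (\<forall>i<q. finite (H i) \<and> (\<forall>t\<in>H i. length t = length (xs i) \<and> (\<forall>s\<in>set t. ground s))) \<and>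
     qtaut A (\<Union>i\<in>{..<p}. inst_set (xs i) (F i) (H i)) (\<Union>i\<in>{p..<q}. inst_set (xs i) (F i) (H i))"

text \<open>Decomposition (U_0, ..., U_{q-1}) o W with fresh variables al = (al_1..al_n) and
  W = {w_1, ..., w_k} given as the list ws.\<close>
definition decomposition :: "nat \<Rightarrow> nat \<Rightarrow> (nat \<Rightarrow> 'v list) \<Rightarrow> (nat \<Rightarrow> ('f, 'p, 'v) fm)
     \<Rightarrow> (nat \<Rightarrow> ('f, 'v) trm list set) \<Rightarrow> 'v list \<Rightarrow> (nat \<Rightarrow> ('f, 'v) trm list set)
     \<Rightarrow> ('f, 'v) trm list list \<Rightarrow> bool" where
  "decomposition p q xs F H al U ws \<longleftrightarrow>
     distinct al \<and>
     (\<forall>i<q. set al \<inter> (set (xs i) \<union> vars_fm (F i)) = {}) \<and>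
     (\<forall>i<q. finite (U i) \<and>
        (\<forall>u\<in>U i. length u = length (xs i) \<and> (\<forall>s\<in>set u. vars_trm s \<subseteq> set al))) \<and>
     (\<forall>w\<in>set ws. length w = length al \<and> (\<forall>s\<in>set w. ground s)) \<and>
     (\<forall>i<q. length (xs i) > 0 \<longrightarrow>
        H i = {map (subst_trm (mk_sub al w)) u | u w. u \<in> U i \<and> w \<in> set ws})"

definition F' :: "(nat \<Rightarrow> 'v list) \<Rightarrow> (nat \<Rightarrow> ('f, 'p, 'v) fm) \<Rightarrow> (nat \<Rightarrow> ('f, 'v) trm list set)
     \<Rightarrow> nat \<Rightarrow> ('f, 'p, 'v) fm set" where
  "F' xs F U i = inst_set (xs i) (F i) (U i)"

definition schem_seq :: "nat \<Rightarrow> nat \<Rightarrow> (nat \<Rightarrow> 'v list) \<Rightarrow> (nat \<Rightarrow> ('f, 'p, 'v) fm)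
     \<Rightarrow> (nat \<Rightarrow> ('f, 'v) trm list set) \<Rightarrow> 'v list \<Rightarrow> ('f, 'v) trm list list
     \<Rightarrow> ('f, 'p, 'v) fm set \<times> ('f, 'p, 'v) fm set" where
  "schem_seq p q xs F U al ws =
     (insert (Imp (PVar (map Var al)) (conj_list (map PVar ws))) (\<Union>i\<in>{..<p}. F' xs F U i),
      \<Union>i\<in>{p..<q}. F' xs F U i)"

definition is_solution :: "'a itself \<Rightarrow> 'v list \<Rightarrow> ('f, 'p, 'v) fm
     \<Rightarrow> ('f, 'p, 'v) fm set \<times> ('f, 'p, 'v) fm set \<Rightarrow> bool" where
  "is_solution T al A Sq \<longleftrightarrow> qtaut T (so_subst al A ` fst Sq) (so_subst al A ` snd Sq)"

definition canonical_formula :: "nat \<Rightarrow> nat \<Rightarrow> (nat \<Rightarrow> 'v list) \<Rightarrow> (nat \<Rightarrow> ('f, 'p, 'v) fm)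
     \<Rightarrow> (nat \<Rightarrow> ('f, 'v) trm list set) \<Rightarrow> ('f, 'p, 'v) fm" where
  "canonical_formula p q xs F U =
     And (conj_set (\<Union>i\<in>{..<p}. F' xs F U i)) (Neg (disj_set (\<Union>i\<in>{p..<q}. F' xs F U i)))"

end

theory Submission
  imports Defs
begin

text \<open>Assume a normal model satisfies C(al) \<longrightarrow> C(w_1) \<and> ... \<and> C(w_k) and F[l] but
  falsifies F[r]. Then it satisfies C(al), hence every C(w_j): under each valuation
  shifted by [al \ w_j] all formulas of F[l] are true and all formulas of F[r] false.
  Since the variables al do not occur in the F_i, an instance F_i[x_i \ u[al \ w]] of the Herbrand
  sequent is the element F_i[x_i \ u] of F'_i read under the shifted valuation. So the
  model makes the antecedent of the Herbrand sequent true and its succedent false,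
  contradicting that H is a Herbrand structure.\<close>

lemma eval_subst_trm:
  "eval_trm I \<sigma> (subst_trm \<tau> t) = eval_trm I (\<lambda>v. eval_trm I \<sigma> (\<tau> v)) t"
  by (induction t) (auto cong: map_cong)

lemma eval_subst_fm:
  "eval_fm I R \<sigma> (subst_fm \<tau> A) = eval_fm I R (\<lambda>v. eval_trm I \<sigma> (\<tau> v)) A"
  by (induction A) (auto simp: eval_subst_trm comp_def)

lemma eval_trm_cong:
  "(\<And>v. v \<in> vars_trm t \<Longrightarrow> \<sigma> v = \<sigma>' v) \<Longrightarrow> eval_trm I \<sigma> t = eval_trm I \<sigma>' t"
proof (induction t)
  case (Fn f ts)
  have "map (eval_trm I \<sigma>) ts = map (eval_trm I \<sigma>') ts"
    unfolding map_eq_conv using Fn by auto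
  then show ?case by (simp only: eval_trm.simps)
qed simp

lemma eval_fm_cong:
  "(\<And>v. v \<in> vars_fm A \<Longrightarrow> \<sigma> v = \<sigma>' v) \<Longrightarrow> eval_fm I R \<sigma> A = eval_fm I R \<sigma>' A"
proof (induction A)
  case (Atom P ts)
  have "map (eval_trm I \<sigma>) ts = map (eval_trm I \<sigma>') ts"
    by (intro map_cong refl eval_trm_cong) (use Atom in auto)
  then show ?case by (simp only: eval_fm.simps)
next
  case (Eq s t)
  have "eval_trm I \<sigma> s = eval_trm I \<sigma>' s" "eval_trm I \<sigma> t = eval_trm I \<sigma>' t"
    by (intro eval_trm_cong; use Eq in auto)+
  then show ?case by simp
qed auto

lemma subst_trm_Var [simp]: "subst_trm Var t = t"
  by (induction t) (auto intro: map_idI)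

lemma subst_fm_Var [simp]: "subst_fm Var A = A"
  by (induction A) (auto intro: map_idI)

lemma X_free_subst_fm: "X_free A \<Longrightarrow> X_free (subst_fm \<tau> A)"
  by (induction A) auto

lemma so_subst_X_free: "X_free B \<Longrightarrow> so_subst al A B = B"
  by (induction B) auto

lemma so_subst_conj_list: "so_subst al A (conj_list Bs) = conj_list (map (so_subst al A) Bs)"
  by (induction Bs) auto

lemma eval_conj_list: "eval_fm I R \<sigma> (conj_list As) = (\<forall>A\<in>set As. eval_fm I R \<sigma> A)"
  by (induction As) auto

lemma eval_disj_list: "eval_fm I R \<sigma> (disj_list As) = (\<exists>A\<in>set As. eval_fm I R \<sigma> A)"
  by (induction As) auto

lemma X_free_conj_list: "(\<forall>A\<in>set As. X_free A) \<Longrightarrow> X_free (conj_list As)"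
  by (induction As) auto

lemma X_free_disj_list: "(\<forall>A\<in>set As. X_free A) \<Longrightarrow> X_free (disj_list As)"
  by (induction As) auto

lemma set_some_list: "finite S \<Longrightarrow> set (SOME xs. set xs = S) = S"
  by (metis (mono_tags, lifting) finite_list someI_ex)

lemma eval_conj_set: "finite S \<Longrightarrow> eval_fm I R \<sigma> (conj_set S) = (\<forall>A\<in>S. eval_fm I R \<sigma> A)"
  unfolding conj_set_def by (simp add: eval_conj_list set_some_list)

lemma eval_disj_set: "finite S \<Longrightarrow> eval_fm I R \<sigma> (disj_set S) = (\<exists>A\<in>S. eval_fm I R \<sigma> A)"
  unfolding disj_set_def by (simp add: eval_disj_list set_some_list)

lemma X_free_conj_set: "finite S \<Longrightarrow> \<forall>A\<in>S. X_free A \<Longrightarrow> X_free (conj_set S)"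
  unfolding conj_set_def by (simp add: X_free_conj_list set_some_list)

lemma X_free_disj_set: "finite S \<Longrightarrow> \<forall>A\<in>S. X_free A \<Longrightarrow> X_free (disj_set S)"
  unfolding disj_set_def by (simp add: X_free_disj_list set_some_list)

lemma mk_sub_map_Var [simp]: "mk_sub al (map Var al) = Var"
  unfolding mk_sub_def by (auto simp: map_of_zip_map split: option.split)

lemma mk_sub_notin: "v \<notin> set x \<Longrightarrow> mk_sub x u v = Var v"
  unfolding mk_sub_def
  by (auto split: option.split dest!: map_of_SomeD set_zip_leftD)

lemma mk_sub_map:
  assumes "length u = length x" "v \<in> set x"
  shows "mk_sub x (map g u) v = g (mk_sub x u v)"
proof -
  obtain y where "map_of (zip x u) v = Some y"
    using assms map_of_zip_is_Some by metis
  then show ?thesis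
    unfolding mk_sub_def zip_map2 map_of_map by simp
qed

text \<open>Instantiating x by u and then al by w is instantiating x by u[al \ w], provided al does
  not occur in A; stated semantically, with the second substitution absorbed into the
  valuation.\<close>
lemma eval_subst_mk_sub_compose:
  assumes "length u = length x" "set al \<inter> vars_fm A = {}"
  shows "eval_fm I R \<sigma> (subst_fm (mk_sub x (map (subst_trm (mk_sub al w)) u)) A)
       = eval_fm I R (\<lambda>v. eval_trm I \<sigma> (mk_sub al w v)) (subst_fm (mk_sub x u) A)"
  unfolding eval_subst_fm
proof (rule eval_fm_cong)
  fix v assume v: "v \<in> vars_fm A"
  show "eval_trm I \<sigma> (mk_sub x (map (subst_trm (mk_sub al w)) u) v) =
        eval_trm I (\<lambda>v. eval_trm I \<sigma> (mk_sub al w v)) (mk_sub x u v)"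
  proof (cases "v \<in> set x")
    case True
    then show ?thesis using assms by (simp add: mk_sub_map eval_subst_trm)
  next
    case False
    moreover have "v \<notin> set al" using v assms by auto
    ultimately show ?thesis by (simp add: mk_sub_notin)
  qed
qed

lemma finite_inst_set: "finite T \<Longrightarrow> finite (inst_set x A T)"
  unfolding inst_set_def by auto

lemma X_free_inst_set: "X_free A \<Longrightarrow> B \<in> inst_set x A T \<Longrightarrow> X_free B"
  unfolding inst_set_def by (auto split: if_splits intro: X_free_subst_fm)

lemma X_free_F':
  "sigma1_sequent p q xs F \<Longrightarrow> i < q \<Longrightarrow> B \<in> F' xs F U i \<Longrightarrow> X_free B"
  unfolding sigma1_sequent_def F'_def by (auto intro: X_free_inst_set)

lemma inst_set_decomposition_cases:
  assumes "decomposition p q xs F H al U ws" "i < q"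
    and "A \<in> inst_set (xs i) (F i) (H i)"
  obtains "A \<in> F' xs F U i"
  | B w where "B \<in> F' xs F U i" "w \<in> set ws"
      "eval_fm I R \<sigma> A = eval_fm I R (\<lambda>v. eval_trm I \<sigma> (mk_sub al w v)) B"
proof (cases "length (xs i) > 0")
  case True
  with assms obtain u w where uw: "u \<in> U i" "w \<in> set ws"
      and A: "A = subst_fm (mk_sub (xs i) (map (subst_trm (mk_sub al w)) u)) (F i)"
    unfolding decomposition_def inst_set_def by auto
  moreover have "subst_fm (mk_sub (xs i) u) (F i) \<in> F' xs F U i"
    using True uw unfolding F'_def inst_set_def by auto
  moreover have "length u = length (xs i)" "set al \<inter> vars_fm (F i) = {}"
    using assms(1,2) uw unfolding decomposition_def by auto
  ultimately show thesis
    using that(2) eval_subst_mk_sub_compose by metis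
next
  case False
  then show thesis
    using assms(3) that(1) unfolding F'_def inst_set_def by simp
qed

lemma
  assumes "sigma1_sequent p q xs F" "decomposition p q xs F H al U ws"
  shows X_free_canonical_formula: "X_free (canonical_formula p q xs F U)"
    and eval_canonical_formula: "eval_fm I R \<sigma> (canonical_formula p q xs F U) \<longleftrightarrow>
      (\<forall>i<q. \<forall>B\<in>F' xs F U i. eval_fm I R \<sigma> B \<longleftrightarrow> i < p)"
proof -
  have p_le_q: "p \<le> q"
    using assms(1) unfolding sigma1_sequent_def by auto
  then have lt_q: "\<And>i. i < p \<Longrightarrow> i < q"
    by simp
  have "\<And>i. i < q \<Longrightarrow> finite (F' xs F U i)"
    using assms(2) unfolding decomposition_def F'_def by (auto intro: finite_inst_set)
  then have fin: "finite (\<Union>i\<in>{..<p}. F' xs F U i)" "finite (\<Union>i\<in>{p..<q}. F' xs F U i)"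
    using p_le_q by auto
  have "\<forall>B\<in>(\<Union>i\<in>{..<p}. F' xs F U i). X_free B" "\<forall>B\<in>(\<Union>i\<in>{p..<q}. F' xs F U i). X_free B"
    using X_free_F'[OF assms(1)] lt_q by auto
  with fin show "X_free (canonical_formula p q xs F U)"
    unfolding canonical_formula_def by (simp add: X_free_conj_set X_free_disj_set)
  show "eval_fm I R \<sigma> (canonical_formula p q xs F U) \<longleftrightarrow>
      (\<forall>i<q. \<forall>B\<in>F' xs F U i. eval_fm I R \<sigma> B \<longleftrightarrow> i < p)"
    unfolding canonical_formula_def using fin
    by (auto simp: eval_conj_set eval_disj_set not_less dest: lt_q)
qed

lemma eval_herbrand_instance:
  assumes "sigma1_sequent p q xs F" "decomposition p q xs F H al U ws"
    and "i < q" "A \<in> inst_set (xs i) (F i) (H i)"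
    and "eval_fm I R \<sigma> (canonical_formula p q xs F U)"
    and "\<forall>w\<in>set ws. eval_fm I R (\<lambda>v. eval_trm I \<sigma> (mk_sub al w v)) (canonical_formula p q xs F U)"
  shows "eval_fm I R \<sigma> A \<longleftrightarrow> i < p"
  using assms(2-4)
proof (cases rule: inst_set_decomposition_cases[where I = I and R = R and \<sigma> = \<sigma>])
  case 1
  then show ?thesis using assms(3,5) eval_canonical_formula[OF assms(1,2)] by blast
next
  case (2 B w)
  then show ?thesis using assms(3,6) eval_canonical_formula[OF assms(1,2)] by metis
qed

lemma so_subst_image_X_free: "\<forall>B\<in>S. X_free B \<Longrightarrow> so_subst al A ` S = S"
  by (simp add: so_subst_X_free)

lemma is_solution_schem_seq_iff:
  assumes "sigma1_sequent p q xs F"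
  shows "is_solution T al A (schem_seq p q xs F U al ws) \<longleftrightarrow>
    qtaut T (insert (Imp A (conj_list (map (\<lambda>w. subst_fm (mk_sub al w) A) ws)))
                    (\<Union>i\<in>{..<p}. F' xs F U i))
            (\<Union>i\<in>{p..<q}. F' xs F U i)"
proof -
  have "i < p \<Longrightarrow> i < q" for i
    using assms unfolding sigma1_sequent_def by simp
  then have "so_subst al A ` (\<Union>i\<in>{..<p}. F' xs F U i) = (\<Union>i\<in>{..<p}. F' xs F U i)"
      "so_subst al A ` (\<Union>i\<in>{p..<q}. F' xs F U i) = (\<Union>i\<in>{p..<q}. F' xs F U i)"
    using X_free_F'[OF assms] by (auto intro!: so_subst_image_X_free)
  moreover have "so_subst al A (Imp (PVar (map Var al)) (conj_list (map PVar ws)))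
      = Imp A (conj_list (map (\<lambda>w. subst_fm (mk_sub al w) A) ws))"
    by (simp add: so_subst_conj_list comp_def)
  ultimately show ?thesis
    unfolding is_solution_def schem_seq_def by (simp only: fst_conv snd_conv image_insert)
qed

lemma X_free_solved_schem_seq:
  assumes "sigma1_sequent p q xs F" "X_free A"
  shows "\<forall>B\<in>insert (Imp A (conj_list (map (\<lambda>w. subst_fm (mk_sub al w) A) ws)))
      (\<Union>i\<in>{..<p}. F' xs F U i) \<union> (\<Union>i\<in>{p..<q}. F' xs F U i). X_free B"
proof -
  have "i < p \<Longrightarrow> i < q" for i
    using assms(1) unfolding sigma1_sequent_def by simp
  then show ?thesis
    using assms(2) X_free_F'[OF assms(1)]
    by (auto simp: X_free_subst_fm X_free_conj_list)
qed

theorem mainTheorem1: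
  fixes p q :: nat
    and xs :: "nat \<Rightarrow> 'v list"
    and F :: "nat \<Rightarrow> ('f, 'p, 'v) fm"
    and H U :: "nat \<Rightarrow> ('f, 'v) trm list set"
    and al :: "'v list"
    and ws :: "('f, 'v) trm list list"
  assumes "sigma1_sequent p q xs F"
    and "herbrand_structure TYPE('a) p q xs F H"
    and "decomposition p q xs F H al U ws"
  shows "is_solution TYPE('a) al (canonical_formula p q xs F U) (schem_seq p q xs F U al ws)"
proof -
  let ?C = "canonical_formula p q xs F U"
  have lt_q: "\<And>i. i < p \<Longrightarrow> i < q"
    using assms(1) unfolding sigma1_sequent_def by simp
  show ?thesis
    unfolding is_solution_schem_seq_iff[OF assms(1)] qtaut_def
  proof (intro conjI allI impI)
    show "\<forall>B\<in>insert (Imp ?C (conj_list (map (\<lambda>w. subst_fm (mk_sub al w) ?C) ws)))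
        (\<Union>i\<in>{..<p}. F' xs F U i) \<union> (\<Union>i\<in>{p..<q}. F' xs F U i). X_free B"
      using X_free_solved_schem_seq[OF assms(1) X_free_canonical_formula[OF assms(1,3)]] .
  next
    fix I :: "'f \<Rightarrow> 'a list \<Rightarrow> 'a" and R :: "'p \<Rightarrow> 'a list \<Rightarrow> bool" and \<sigma> :: "'v \<Rightarrow> 'a"
    assume antecedent: "\<forall>A\<in>insert (Imp ?C (conj_list (map (\<lambda>w. subst_fm (mk_sub al w) ?C) ws)))
        (\<Union>i\<in>{..<p}. F' xs F U i). eval_fm I R \<sigma> A"
    show "\<exists>B\<in>\<Union>i\<in>{p..<q}. F' xs F U i. eval_fm I R \<sigma> B"
    proof (rule ccontr)
      assume "\<not> ?thesis"
      with antecedent have C: "eval_fm I R \<sigma> ?C"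
        unfolding eval_canonical_formula[OF assms(1,3)] by (auto simp: not_less)
      with antecedent have C_shifted:
          "\<forall>w\<in>set ws. eval_fm I R (\<lambda>v. eval_trm I \<sigma> (mk_sub al w v)) ?C"
        by (simp add: eval_conj_list eval_subst_fm)
      have "\<forall>A\<in>\<Union>i\<in>{..<p}. inst_set (xs i) (F i) (H i). eval_fm I R \<sigma> A"
           "\<forall>B\<in>\<Union>i\<in>{p..<q}. inst_set (xs i) (F i) (H i). \<not> eval_fm I R \<sigma> B"
        using eval_herbrand_instance[OF assms(1,3) _ _ C C_shifted] lt_q by auto
      moreover have "(\<forall>A\<in>\<Union>i\<in>{..<p}. inst_set (xs i) (F i) (H i). eval_fm I R \<sigma> A) \<longrightarrow>
          (\<exists>B\<in>\<Union>i\<in>{p..<q}. inst_set (xs i) (F i) (H i). eval_fm I R \<sigma> B)"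
        using assms(2) unfolding herbrand_structure_def qtaut_def by (elim conjE allE)
      ultimately show False
        by blast
    qed
  qed
qed

end
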